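(* Let $H$ be a graph and $n$ a positive integer. Then $\mathrm{IR}(H, K_{1,n}) \leq |E(H)|(n-1) + |V(H)|$. Moreover, if $s$ is a positive integer and $H'$ is the blow-up of $H$ with $s$ vertices in each part, then $\mathrm{IR}(H', K_{1,n}) \leq s\big(|E(H)|(n-1)+|V(H)|\big)$.
   Context: All graphs are finite and simple. $K_{1,n}$ denotes the star with $n$ edges. The blow-up of $H$ with $s$ vertices in each part is the graph obtained by replacing each vertex $v$ of $H$ by an independent set $V_v$ of $s$ vertices (the sets pairwise disjoint) and joining $u'\in V_u$ to $v'\in V_v$ if and only if $uv\in E(H)$. For graphs $F$, $H$, $G$, write $F \overset{\text{ind}}{\longrightarrow} (H,G)$ if for every coloring of the edges of $F$ with red and blue there is either a red induced copy of $H$ (a vertex set $S\subseteq V(F)$ with $F[S]\cong H$ and all edges of $F[S]$ red) or a blue induced copy of $G$ (defined analogously with blue). The induced Ramsey number $\mathrm{IR}(H,G)$ is the smallest number of vertices of a graph $F$ with $F \overset{\text{ind}}{\longrightarrow} (H,G)$. *)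

theory Defs
  imports Main
begin

type_synonym 'a graph = "'a set \<times> 'a set set"

definition verts :: "'a graph \<Rightarrow> 'a set" where "verts G = fst G"
definition edges :: "'a graph \<Rightarrow> 'a set set" where "edges G = snd G"

definition graph :: "'a graph \<Rightarrow> bool" where
  "graph G \<longleftrightarrow> finite (verts G) \<and>
     (\<forall>e\<in>edges G. \<exists>u v. e = {u, v} \<and> u \<noteq> v \<and> u \<in> verts G \<and> v \<in> verts G)"

text \<open>Edge colourings: a colouring assigns to each edge a colour (True = red, False = blue).
  There is an induced copy of H in F all of whose edges have colour col.\<close>
definition mono_induced_copy ::
  "'b graph \<Rightarrow> 'a graph \<Rightarrow> ('b set \<Rightarrow> bool) \<Rightarrow> bool \<Rightarrow> bool" where
  "mono_induced_copy F H c col \<longleftrightarrow>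
     (\<exists>f. inj_on f (verts H) \<and> f ` verts H \<subseteq> verts F \<and>
        (\<forall>u\<in>verts H. \<forall>v\<in>verts H. {u, v} \<in> edges H \<longleftrightarrow> {f u, f v} \<in> edges F) \<and>
        (\<forall>u\<in>verts H. \<forall>v\<in>verts H. {f u, f v} \<in> edges F \<longrightarrow> c {f u, f v} = col))"

definition ind_arrows :: "'c graph \<Rightarrow> 'a graph \<Rightarrow> 'b graph \<Rightarrow> bool" where
  "ind_arrows F H G \<longleftrightarrow>
     (\<forall>c :: 'c set \<Rightarrow> bool. mono_induced_copy F H c True \<or> mono_induced_copy F G c False)"

text \<open>Induced Ramsey number: least number of vertices of a graph F (vertices taken
  w.l.o.g. to be natural numbers) with F ind-arrowing (H,G).\<close>
definition IR :: "'a graph \<Rightarrow> 'b graph \<Rightarrow> nat" where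
  "IR H G = (LEAST m. \<exists>F :: nat graph. graph F \<and> card (verts F) = m \<and> ind_arrows F H G)"

definition star :: "nat \<Rightarrow> nat graph" where
  "star n = ({0..n}, {{0, i} | i. i \<in> {1..n}})"

definition blowup :: "'a graph \<Rightarrow> nat \<Rightarrow> ('a \<times> nat) graph" where
  "blowup H s = (verts H \<times> {0..<s},
     {{(u, i), (v, j)} | u v i j. {u, v} \<in> edges H \<and> i < s \<and> j < s})"

end

theory Submission
  imports Defs
begin

(*
  Order the vertices of H and blow up each vertex v into s (1 + (n - 1) d(v)) copies, where d(v)
  is the number of neighbours of v preceding it: copies of adjacent vertices are completely
  joined, copies of one vertex are independent.  This graph has s (|V(H)| + (n - 1) |E(H)|)
  vertices.  If an edge colouring has no blue induced K_{1,n}, then a copy sends at most n - 1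
  blue edges into the independent set of copies of a neighbour.  Going through the vertices in
  order, the s copies already chosen for each of the d(v) earlier neighbours of v are joined in
  blue to at most s d(v) (n - 1) copies of v, so s copies of v remain that are joined in red to
  all earlier choices.  The chosen copies span a red induced blow-up of H with s vertices in each
  part, and for s = 1 this blow-up contains H as an induced subgraph.
*)

lemma graph_edgeD:
  assumes "graph H" "{u, v} \<in> edges H"
  shows "u \<in> verts H" "v \<in> verts H" "u \<noteq> v"
proof -
  obtain a b where "{u, v} = {a, b}" "a \<noteq> b" "a \<in> verts H" "b \<in> verts H"
    using assms unfolding graph_def by blast
  then show "u \<in> verts H" "v \<in> verts H" "u \<noteq> v"
    by (auto simp: doubleton_eq_iff)
qed

lemma graph_edge_subset_verts: "graph H \<Longrightarrow> e \<in> edges H \<Longrightarrow> e \<subseteq> verts H"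
  unfolding graph_def by auto

lemma graph_card_edge: "graph H \<Longrightarrow> e \<in> edges H \<Longrightarrow> card e = 2"
  unfolding graph_def card_2_iff by blast

definition induced_embedding :: "('a \<Rightarrow> 'b) \<Rightarrow> 'a graph \<Rightarrow> 'b graph \<Rightarrow> bool" where
  "induced_embedding f H F \<longleftrightarrow> inj_on f (verts H) \<and> f ` verts H \<subseteq> verts F \<and>
     (\<forall>u\<in>verts H. \<forall>v\<in>verts H. {u, v} \<in> edges H \<longleftrightarrow> {f u, f v} \<in> edges F)"

lemma mono_induced_copy_iff:
  "mono_induced_copy F H c col \<longleftrightarrow>
     (\<exists>f. induced_embedding f H F \<and>
        (\<forall>u\<in>verts H. \<forall>v\<in>verts H. {f u, f v} \<in> edges F \<longrightarrow> c {f u, f v} = col))"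
  unfolding mono_induced_copy_def induced_embedding_def by blast

lemma induced_embedding_comp:
  assumes "induced_embedding g H H'" "induced_embedding f H' F"
  shows "induced_embedding (f \<circ> g) H F"
proof -
  have "g u \<in> verts H'" if "u \<in> verts H" for u
    using assms(1) that unfolding induced_embedding_def by blast
  then show ?thesis
    using assms unfolding induced_embedding_def by (auto intro: comp_inj_on inj_on_subset)
qed

lemma mono_induced_copy_induced_subgraph:
  assumes g: "induced_embedding g H H'" and copy: "mono_induced_copy F H' c col"
  shows "mono_induced_copy F H c col"
proof -
  obtain f where f: "induced_embedding f H' F"
    and col: "\<forall>u\<in>verts H'. \<forall>v\<in>verts H'. {f u, f v} \<in> edges F \<longrightarrow> c {f u, f v} = col"
    using copy unfolding mono_induced_copy_iff by blast
  have "g u \<in> verts H'" if "u \<in> verts H" for u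
    using g that unfolding induced_embedding_def by blast
  then show ?thesis
    unfolding mono_induced_copy_iff using induced_embedding_comp[OF g f] col by auto
qed

lemma mono_induced_copy_induced_supergraph:
  assumes g: "induced_embedding g F F'" and copy: "mono_induced_copy F X (\<lambda>e. c (g ` e)) col"
  shows "mono_induced_copy F' X c col"
proof -
  obtain f where f: "induced_embedding f X F"
    and col: "\<forall>u\<in>verts X. \<forall>v\<in>verts X. {f u, f v} \<in> edges F \<longrightarrow> c (g ` {f u, f v}) = col"
    using copy unfolding mono_induced_copy_iff by blast
  have "{g (f u), g (f v)} \<in> edges F' \<longleftrightarrow> {f u, f v} \<in> edges F" if "u \<in> verts X" "v \<in> verts X" for u v
    using f g that unfolding induced_embedding_def by blast
  then show ?thesis
    unfolding mono_induced_copy_iff using induced_embedding_comp[OF f g] col by auto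
qed

lemma ind_arrows_induced_subgraph:
  "induced_embedding g H H' \<Longrightarrow> ind_arrows F H' G \<Longrightarrow> ind_arrows F H G"
  unfolding ind_arrows_def using mono_induced_copy_induced_subgraph by blast

lemma ind_arrows_induced_supergraph:
  "induced_embedding g F F' \<Longrightarrow> ind_arrows F H G \<Longrightarrow> ind_arrows F' H G"
  unfolding ind_arrows_def using mono_induced_copy_induced_supergraph by metis

lemma graph_relabel:
  assumes "graph F" "inj_on g (verts F)"
  shows "graph (g ` verts F, (`) g ` edges F)"
    and "induced_embedding g F (g ` verts F, (`) g ` edges F)"
proof -
  have "\<exists>p q. e' = {p, q} \<and> p \<noteq> q \<and> p \<in> g ` verts F \<and> q \<in> g ` verts F"
    if e': "e' \<in> (`) g ` edges F" for e'
  proof -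
    obtain u v where "e' = {g u, g v}" "u \<noteq> v" "u \<in> verts F" "v \<in> verts F"
      using e' assms(1) unfolding graph_def by auto
    with assms(2) show ?thesis by (metis image_eqI inj_onD)
  qed
  with assms(1) show "graph (g ` verts F, (`) g ` edges F)"
    unfolding graph_def verts_def edges_def by simp
  have "{g u, g v} \<in> (`) g ` edges F \<longleftrightarrow> {u, v} \<in> edges F"
    if "u \<in> verts F" "v \<in> verts F" for u v
  proof
    assume "{g u, g v} \<in> (`) g ` edges F"
    then obtain e where e: "e \<in> edges F" "g ` e = g ` {u, v}" by auto
    moreover have "e \<subseteq> verts F" using graph_edge_subset_verts[OF assms(1) e(1)] .
    ultimately show "{u, v} \<in> edges F"
      using that inj_on_image_eq_iff[OF assms(2)] by (metis empty_subsetI insert_subset)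
  next
    assume "{u, v} \<in> edges F"
    then show "{g u, g v} \<in> (`) g ` edges F" by (rule rev_image_eqI) simp
  qed
  then show "induced_embedding g F (g ` verts F, (`) g ` edges F)"
    using assms(2) unfolding induced_embedding_def verts_def edges_def by auto
qed

lemma IR_le_card:
  assumes "graph F" "ind_arrows F H G"
  shows "IR H G \<le> card (verts F)"
proof -
  have "finite (verts F)" using assms(1) unfolding graph_def by simp
  then obtain g :: "_ \<Rightarrow> nat" where g: "inj_on g (verts F)"
    using ex_bij_betw_finite_nat bij_betw_imp_inj_on by blast
  let ?F = "(g ` verts F, (`) g ` edges F)"
  have "graph ?F" "ind_arrows ?F H G"
    using graph_relabel[OF assms(1) g] ind_arrows_induced_supergraph assms(2) by blast+
  moreover have "card (verts ?F) = card (verts F)"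
    using card_image[OF g] by (simp add: verts_def)
  ultimately show ?thesis
    unfolding IR_def by (intro Least_le) blast
qed

definition weighted_blowup :: "'a graph \<Rightarrow> ('a \<Rightarrow> nat) \<Rightarrow> ('a \<times> nat) graph" where
  "weighted_blowup H w = (SIGMA v:verts H. {..<w v},
     {{(u, i), (v, j)} | u v i j. {u, v} \<in> edges H \<and> i < w u \<and> j < w v})"

lemma verts_weighted_blowup: "verts (weighted_blowup H w) = (SIGMA v:verts H. {..<w v})"
  by (simp add: weighted_blowup_def verts_def)

lemma edge_weighted_blowup_iff:
  "{(u, i), (v, j)} \<in> edges (weighted_blowup H w) \<longleftrightarrow> {u, v} \<in> edges H \<and> i < w u \<and> j < w v"
proof
  assume "{(u, i), (v, j)} \<in> edges (weighted_blowup H w)"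
  then obtain u' v' i' j' where e: "{(u, i), (v, j)} = {(u', i'), (v', j')}"
    and uv': "{u', v'} \<in> edges H" "i' < w u'" "j' < w v'"
    by (auto simp: weighted_blowup_def edges_def)
  from e have "(u, i) = (u', i') \<and> (v, j) = (v', j') \<or> (u, i) = (v', j') \<and> (v, j) = (u', i')"
    by (simp add: doubleton_eq_iff)
  with uv' show "{u, v} \<in> edges H \<and> i < w u \<and> j < w v"
    by (auto simp: insert_commute)
qed (auto simp: weighted_blowup_def edges_def)

lemma graph_weighted_blowup:
  assumes "graph H"
  shows "graph (weighted_blowup H w)"
proof -
  have "\<exists>p q. e = {p, q} \<and> p \<noteq> q \<and> p \<in> verts (weighted_blowup H w) \<and> q \<in> verts (weighted_blowup H w)"
    if e: "e \<in> edges (weighted_blowup H w)" for e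
  proof -
    obtain u v i j where "e = {(u, i), (v, j)}" "{u, v} \<in> edges H" "i < w u" "j < w v"
      using e by (auto simp: weighted_blowup_def edges_def)
    with graph_edgeD[OF assms] show ?thesis
      by (intro exI[of _ "(u, i)"] exI[of _ "(v, j)"]) (auto simp: verts_weighted_blowup)
  qed
  with assms show ?thesis
    by (auto simp: graph_def verts_weighted_blowup)
qed

lemma blowup_eq_weighted_blowup: "blowup H s = weighted_blowup H (\<lambda>_. s)"
  by (simp add: blowup_def weighted_blowup_def atLeast0LessThan)

lemma induced_embedding_blowup_1: "induced_embedding (\<lambda>u. (u, 0)) H (blowup H 1)"
  unfolding induced_embedding_def blowup_eq_weighted_blowup verts_weighted_blowup
    edge_weighted_blowup_iff by (auto intro: inj_onI)

lemma edge_star_iff: "{a, b} \<in> edges (star n) \<longleftrightarrow> a = 0 \<and> b \<in> {1..n} \<or> b = 0 \<and> a \<in> {1..n}"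
  by (auto simp: star_def edges_def doubleton_eq_iff)

lemma mono_induced_copy_starI:
  assumes F: "graph F" and p: "p \<in> verts F" "p \<notin> L" and L: "L \<subseteq> verts F" "card L = n"
    and spokes: "\<And>l. l \<in> L \<Longrightarrow> {p, l} \<in> edges F \<and> c {p, l} = col"
    and independent: "\<And>l l'. l \<in> L \<Longrightarrow> l' \<in> L \<Longrightarrow> {l, l'} \<notin> edges F"
  shows "mono_induced_copy F (star n) c col"
proof -
  have "finite L"
    using F finite_subset[OF L(1)] by (simp add: graph_def)
  then obtain h where h: "bij_betw h {1..n} L"
    using ex_bij_betw_nat_finite_1 L(2) by metis
  define f where "f k = (if k = 0 then p else h k)" for k
  have hL: "h k \<in> L" if "k \<in> {1..n}" for k
    using bij_betw_apply[OF h that] .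
  have no_loop: "{p, p} \<notin> edges F"
    using graph_edgeD(3)[OF F, of p p] by auto
  have edge_iff: "{a, b} \<in> edges (star n) \<longleftrightarrow> {f a, f b} \<in> edges F"
    if "a \<in> {0..n}" "b \<in> {0..n}" for a b
  proof (cases "a = 0"; cases "b = 0")
    assume "a \<noteq> 0" "b \<noteq> 0"
    with that show ?thesis using independent[OF hL hL] by (simp add: edge_star_iff f_def)
  qed (use that no_loop spokes[OF hL] edge_star_iff[of 0 0 n] in
      \<open>auto simp: edge_star_iff f_def insert_commute\<close>)
  have "inj_on f {0..n}"
  proof (rule inj_onI)
    fix a b assume ab: "a \<in> {0..n}" "b \<in> {0..n}" "f a = f b"
    show "a = b"
    proof (cases "a = 0"; cases "b = 0")
      assume "a \<noteq> 0" "b \<noteq> 0"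
      with ab have "h a = h b" "a \<in> {1..n}" "b \<in> {1..n}" by (auto simp: f_def)
      then show ?thesis using inj_onD[OF bij_betw_imp_inj_on[OF h]] by blast
    qed (use ab p(2) hL in \<open>auto simp: f_def\<close>)
  qed
  moreover have "f ` {0..n} \<subseteq> verts F"
    using p(1) L(1) hL unfolding f_def by auto
  moreover have "c {f a, f b} = col" if "a \<in> {0..n}" "b \<in> {0..n}" "{f a, f b} \<in> edges F" for a b
  proof -
    have "a = 0 \<and> b \<in> {1..n} \<or> b = 0 \<and> a \<in> {1..n}"
      using that edge_iff[of a b] edge_star_iff[of a b n] by blast
    then show ?thesis
      using spokes[OF hL] by (auto simp: f_def insert_commute)
  qed
  ultimately show ?thesis
    unfolding mono_induced_copy_iff induced_embedding_def using edge_iff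
    by (intro exI[of _ f]) (simp add: star_def verts_def)
qed

text \<open>n such blue edges would span a blue induced star, since the copies of x are independent.\<close>
lemma card_blue_fibre_less:
  assumes H: "graph H" and ux: "{u, x} \<in> edges H" and i: "i < w u"
    and no_blue_star: "\<not> mono_induced_copy (weighted_blowup H w) (star n) c False"
  shows "card {j. j < w x \<and> \<not> c {(u, i), (x, j)}} < n"
proof (rule ccontr)
  assume "\<not> ?thesis"
  then obtain J where J: "J \<subseteq> {j. j < w x \<and> \<not> c {(u, i), (x, j)}}" "card J = n"
    by (meson not_less obtain_subset_with_card_n)
  have "mono_induced_copy (weighted_blowup H w) (star n) c False"
  proof (rule mono_induced_copy_starI[where p = "(u, i)" and L = "Pair x ` J"])
    show "graph (weighted_blowup H w)"
      using graph_weighted_blowup[OF H] .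
    show "card (Pair x ` J) = n"
      using J(2) by (simp add: card_image inj_on_def)
    show "(u, i) \<notin> Pair x ` J"
      using graph_edgeD(3)[OF H ux] by auto
    show "(u, i) \<in> verts (weighted_blowup H w)" "Pair x ` J \<subseteq> verts (weighted_blowup H w)"
      using graph_edgeD[OF H ux] i J(1) by (auto simp: verts_weighted_blowup)
    show "{(u, i), l} \<in> edges (weighted_blowup H w) \<and> c {(u, i), l} = False" if "l \<in> Pair x ` J" for l
      using that ux i J(1) by (auto simp: edge_weighted_blowup_iff)
    show "{l, l'} \<notin> edges (weighted_blowup H w)" if "l \<in> Pair x ` J" "l' \<in> Pair x ` J" for l l'
      using that graph_edgeD(3)[OF H, of x x] by (auto simp: edge_weighted_blowup_iff)
  qed
  with no_blue_star show False ..
qed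

text \<open>The head of the list is the last vertex: x receives s copies of its own and s (n - 1)
  spare copies for each earlier neighbour, i.e. for each neighbour in the tail.\<close>
primrec greedy_weight :: "'a set set \<Rightarrow> nat \<Rightarrow> nat \<Rightarrow> 'a list \<Rightarrow> 'a \<Rightarrow> nat" where
  "greedy_weight E n s [] = (\<lambda>_. 0)"
| "greedy_weight E n s (x # xs) =
     (greedy_weight E n s xs)(x := s * (1 + (n - 1) * card {u \<in> set xs. {u, x} \<in> E}))"

lemma card_edges_within_insert:
  assumes E: "\<forall>e\<in>E. card e = 2" and x: "x \<notin> V" and V: "finite V"
  shows "card {e \<in> E. e \<subseteq> insert x V} = card {e \<in> E. e \<subseteq> V} + card {u \<in> V. {u, x} \<in> E}"
proof -
  have "{e \<in> E. e \<subseteq> insert x V} = {e \<in> E. e \<subseteq> V} \<union> (\<lambda>u. {u, x}) ` {u \<in> V. {u, x} \<in> E}"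
  proof (intro equalityI subsetI)
    fix e assume e: "e \<in> {e \<in> E. e \<subseteq> insert x V}"
    then obtain a b where ab: "e = {a, b}" "a \<noteq> b"
      using E card_2_iff by (metis (no_types, lifting) mem_Collect_eq)
    show "e \<in> {e \<in> E. e \<subseteq> V} \<union> (\<lambda>u. {u, x}) ` {u \<in> V. {u, x} \<in> E}"
    proof (cases "x \<in> e")
      case True
      then obtain u where "e = {u, x}" "u \<noteq> x"
        using ab by (auto simp: insert_commute)
      with e show ?thesis by auto
    qed (use e in auto)
  qed auto
  moreover have "finite {e \<in> E. e \<subseteq> V}"
    using V by (auto intro: finite_subset[of _ "Pow V"])
  moreover have "inj_on (\<lambda>u. {u, x}) {u \<in> V. {u, x} \<in> E}"
    using x by (auto simp: inj_on_def doubleton_eq_iff)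
  moreover have "{e \<in> E. e \<subseteq> V} \<inter> (\<lambda>u. {u, x}) ` {u \<in> V. {u, x} \<in> E} = {}"
    using x by auto
  ultimately show ?thesis
    using V by (simp add: card_Un_disjoint card_image)
qed

lemma sum_greedy_weight:
  assumes E: "\<forall>e\<in>E. card e = 2"
  shows "distinct xs \<Longrightarrow>
    (\<Sum>v\<in>set xs. greedy_weight E n s xs v) = s * (length xs + (n - 1) * card {e \<in> E. e \<subseteq> set xs})"
proof (induction xs)
  case Nil
  have "{e \<in> E. e \<subseteq> {}} = {}" using E by auto
  then show ?case by simp
next
  case (Cons x xs)
  let ?d = "card {u \<in> set xs. {u, x} \<in> E}"
  have x: "x \<notin> set xs" using Cons.prems by simp
  have "(\<Sum>v\<in>set xs. greedy_weight E n s (x # xs) v) = (\<Sum>v\<in>set xs. greedy_weight E n s xs v)"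
    using x by (intro sum.cong) auto
  then have "(\<Sum>v\<in>set (x # xs). greedy_weight E n s (x # xs) v)
      = s * (1 + (n - 1) * ?d) + (\<Sum>v\<in>set xs. greedy_weight E n s xs v)"
    using x by simp
  also have "\<dots> = s * (length (x # xs) + (n - 1) * (card {e \<in> E. e \<subseteq> set xs} + ?d))"
    using Cons by (simp add: algebra_simps)
  finally show ?case
    using card_edges_within_insert[OF E x] by simp
qed

lemma card_verts_greedy_weighted_blowup:
  assumes H: "graph H" and xs: "distinct xs" "set xs = verts H"
  shows "card (verts (weighted_blowup H (greedy_weight (edges H) n s xs)))
    = s * (card (edges H) * (n - 1) + card (verts H))"
proof -
  have "card (verts (weighted_blowup H (greedy_weight (edges H) n s xs)))
      = (\<Sum>v\<in>set xs. greedy_weight (edges H) n s xs v)"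
    using H unfolding verts_weighted_blowup xs(2) by (simp add: card_SigmaI graph_def)
  also have "\<dots> = s * (length xs + (n - 1) * card {e \<in> edges H. e \<subseteq> set xs})"
    using sum_greedy_weight[OF _ xs(1)] graph_card_edge[OF H] by blast
  also have "{e \<in> edges H. e \<subseteq> set xs} = edges H"
    using graph_edge_subset_verts[OF H] xs(2) by blast
  also have "length xs = card (verts H)"
    using distinct_card[OF xs(1)] xs(2) by simp
  finally show ?thesis by (simp add: algebra_simps)
qed

definition red_selection ::
  "(('a \<times> nat) set \<Rightarrow> bool) \<Rightarrow> 'a graph \<Rightarrow> ('a \<Rightarrow> nat) \<Rightarrow> nat \<Rightarrow> 'a set \<Rightarrow> ('a \<Rightarrow> nat set) \<Rightarrow> bool"
where
  "red_selection c H w s V S \<longleftrightarrow>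
     (\<forall>v\<in>V. S v \<subseteq> {..<w v} \<and> card (S v) = s) \<and>
     (\<forall>u\<in>V. \<forall>v\<in>V. {u, v} \<in> edges H \<longrightarrow> (\<forall>i\<in>S u. \<forall>j\<in>S v. c {(u, i), (v, j)}))"

lemma card_blue_into_fibre_le:
  assumes H: "graph H" and no_blue_star: "\<not> mono_induced_copy (weighted_blowup H w) (star n) c False"
    and N: "finite N" "\<And>u. u \<in> N \<Longrightarrow> {u, x} \<in> edges H \<and> S u \<subseteq> {..<w u} \<and> card (S u) = s"
  shows "card (\<Union>u\<in>N. \<Union>i\<in>S u. {j. j < w x \<and> \<not> c {(u, i), (x, j)}}) \<le> card N * (s * (n - 1))"
proof -
  let ?B = "\<lambda>u i. {j. j < w x \<and> \<not> c {(u, i), (x, j)}}"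
  have vertex: "card (\<Union>i\<in>S u. ?B u i) \<le> s * (n - 1)" if u: "u \<in> N" for u
  proof -
    have ux: "{u, x} \<in> edges H" and S: "S u \<subseteq> {..<w u}" "card (S u) = s"
      using N(2)[OF u] by auto
    have fibre: "card (?B u i) \<le> n - 1" if "i \<in> S u" for i
    proof -
      have "i < w u" using S(1) that by auto
      with card_blue_fibre_less[OF H ux this no_blue_star] show ?thesis by simp
    qed
    have "(\<Sum>i\<in>S u. card (?B u i)) \<le> card (S u) * (n - 1)"
      using sum_bounded_above[OF fibre] by simp
    moreover have "finite (S u)"
      using S(1) finite_subset by blast
    ultimately show ?thesis
      using card_UN_le[of "S u" "?B u"] S(2) by simp
  qed
  have "(\<Sum>u\<in>N. card (\<Union>i\<in>S u. ?B u i)) \<le> card N * (s * (n - 1))"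
    using sum_bounded_above[OF vertex] by simp
  with card_UN_le[OF N(1)] show ?thesis
    by (rule order_trans)
qed

lemma red_selection_insert:
  assumes H: "graph H" and no_blue_star: "\<not> mono_induced_copy (weighted_blowup H w) (star n) c False"
    and S: "red_selection c H w s V S" and V: "finite V" "x \<notin> V"
    and wx: "s * (1 + (n - 1) * card {u \<in> V. {u, x} \<in> edges H}) \<le> w x"
  obtains T where "red_selection c H w s (insert x V) (S(x := T))"
proof -
  define N where "N = {u \<in> V. {u, x} \<in> edges H}"
  define Blue where "Blue = (\<Union>u\<in>N. \<Union>i\<in>S u. {j. j < w x \<and> \<not> c {(u, i), (x, j)}})"
  have "card Blue \<le> card N * (s * (n - 1))"
    unfolding Blue_def
    by (rule card_blue_into_fibre_le[OF H no_blue_star]) (use S V in \<open>auto simp: N_def red_selection_def\<close>)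
  moreover have "s + card N * (s * (n - 1)) \<le> w x"
    using wx by (simp add: N_def algebra_simps)
  moreover have "card ({..<w x} - Blue) = w x - card Blue"
    by (subst card_Diff_subset) (auto simp: Blue_def intro: finite_subset[of _ "{..<w x}"])
  ultimately have "s \<le> card ({..<w x} - Blue)"
    by linarith
  then obtain T where T: "T \<subseteq> {..<w x} - Blue" "card T = s"
    by (meson obtain_subset_with_card_n)
  have red: "c {(u, i), (x, j)}" if "u \<in> V" "{u, x} \<in> edges H" "i \<in> S u" "j \<in> T" for u i j
    using that T(1) unfolding Blue_def N_def by auto
  have "\<forall>v\<in>insert x V. (S(x := T)) v \<subseteq> {..<w v} \<and> card ((S(x := T)) v) = s"
    using S T by (auto simp: red_selection_def)
  moreover have "c {(u, i), (v, j)}"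
    if u: "u \<in> insert x V" and v: "v \<in> insert x V" and uv: "{u, v} \<in> edges H"
      and i: "i \<in> (S(x := T)) u" and j: "j \<in> (S(x := T)) v" for u v i j
  proof -
    have "u \<noteq> v" using graph_edgeD(3)[OF H uv] .
    then consider "u = x" "v \<in> V" | "v = x" "u \<in> V" | "u \<in> V" "v \<in> V"
      using u v by blast
    then show ?thesis
    proof cases
      case 1
      then show ?thesis using red[of v j i] uv i j V(2) by (auto simp: insert_commute split: if_splits)
    next
      case 2
      then show ?thesis using red[of u i j] uv i j V(2) by (auto split: if_splits)
    next
      case 3
      then show ?thesis using S uv i j V(2) by (auto simp: red_selection_def split: if_splits)
    qed
  qed
  ultimately have "red_selection c H w s (insert x V) (S(x := T))"
    unfolding red_selection_def by blast
  with that show thesis .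
qed

lemma red_selection_exists:
  assumes H: "graph H" and no_blue_star: "\<not> mono_induced_copy (weighted_blowup H w) (star n) c False"
  shows "distinct xs \<Longrightarrow> \<forall>v\<in>set xs. greedy_weight (edges H) n s xs v \<le> w v \<Longrightarrow>
    \<exists>S. red_selection c H w s (set xs) S"
proof (induction xs)
  case Nil
  show ?case by (simp add: red_selection_def)
next
  case (Cons x xs)
  have x: "x \<notin> set xs" and distinct: "distinct xs"
    using Cons.prems(1) by auto
  have "greedy_weight (edges H) n s xs v \<le> w v" if v: "v \<in> set xs" for v
  proof -
    have "v \<noteq> x" using v x by blast
    with v Cons.prems(2) show ?thesis by auto
  qed
  then obtain S where S: "red_selection c H w s (set xs) S"
    using Cons.IH[OF distinct] by blast
  have wx: "s * (1 + (n - 1) * card {u \<in> set xs. {u, x} \<in> edges H}) \<le> w x"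
    using Cons.prems(2) by simp
  obtain T where "red_selection c H w s (insert x (set xs)) (S(x := T))"
    using red_selection_insert[OF H no_blue_star S _ x wx] by blast
  then show ?case by auto
qed

lemma mono_induced_copy_of_red_selection:
  assumes S: "red_selection c H w s (verts H) S"
  shows "mono_induced_copy (weighted_blowup H w) (blowup H s) c True"
proof -
  have "\<exists>h. bij_betw h {..<s} (S v)" if "v \<in> verts H" for v
  proof -
    have "finite (S v)" "card (S v) = s"
      using S that finite_subset by (auto simp: red_selection_def)
    then show ?thesis
      using ex_bij_betw_nat_finite by (metis atLeast0LessThan)
  qed
  then obtain h where h: "\<And>v. v \<in> verts H \<Longrightarrow> bij_betw (h v) {..<s} (S v)"
    by metis
  have hS: "h v k \<in> S v" if "v \<in> verts H" "k < s" for v k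
    using bij_betw_apply[OF h[OF that(1)]] that(2) by simp
  have hw: "h v k < w v" if "v \<in> verts H" "k < s" for v k
    using hS[OF that] S that(1) by (auto simp: red_selection_def)
  define f where "f p = (fst p, h (fst p) (snd p))" for p :: "'a \<times> nat"
  have "induced_embedding f (blowup H s) (weighted_blowup H w)"
    unfolding induced_embedding_def blowup_eq_weighted_blowup verts_weighted_blowup
  proof (intro conjI ballI)
    show "inj_on f (SIGMA v:verts H. {..<s})"
    proof (rule inj_onI)
      fix p q assume p: "p \<in> (SIGMA v:verts H. {..<s})" and q: "q \<in> (SIGMA v:verts H. {..<s})"
        and "f p = f q"
      then have "fst p = fst q" "h (fst p) (snd p) = h (fst p) (snd q)"
        by (auto simp: f_def)
      moreover have "snd p = snd q"
        using inj_onD[OF bij_betw_imp_inj_on[OF h] calculation(2)] p q \<open>fst p = fst q\<close> by auto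
      ultimately show "p = q" by (simp add: prod_eq_iff)
    qed
    show "f ` (SIGMA v:verts H. {..<s}) \<subseteq> (SIGMA v:verts H. {..<w v})"
      using hw by (auto simp: f_def)
  next
    fix p q assume "p \<in> (SIGMA v:verts H. {..<s})" "q \<in> (SIGMA v:verts H. {..<s})"
    then show "{p, q} \<in> edges (weighted_blowup H (\<lambda>_. s)) \<longleftrightarrow> {f p, f q} \<in> edges (weighted_blowup H w)"
      using hw by (auto simp: f_def edge_weighted_blowup_iff)
  qed
  moreover have "c {f p, f q} = True"
    if "p \<in> verts (blowup H s)" "q \<in> verts (blowup H s)" "{f p, f q} \<in> edges (weighted_blowup H w)" for p q
    using that hS S
    by (auto simp: f_def red_selection_def blowup_eq_weighted_blowup verts_weighted_blowup edge_weighted_blowup_iff)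
  ultimately show ?thesis
    unfolding mono_induced_copy_iff by (intro exI[of _ f] conjI ballI impI)
qed

lemma ind_arrows_greedy_weighted_blowup:
  assumes H: "graph H" and xs: "distinct xs" "set xs = verts H"
  shows "ind_arrows (weighted_blowup H (greedy_weight (edges H) n s xs)) (blowup H s) (star n)"
  unfolding ind_arrows_def
proof
  fix c
  let ?F = "weighted_blowup H (greedy_weight (edges H) n s xs)"
  show "mono_induced_copy ?F (blowup H s) c True \<or> mono_induced_copy ?F (star n) c False"
  proof (rule disjCI)
    assume "\<not> mono_induced_copy ?F (star n) c False"
    then obtain S where "red_selection c H (greedy_weight (edges H) n s xs) s (set xs) S"
      using red_selection_exists[OF H _ xs(1)] by blast
    then show "mono_induced_copy ?F (blowup H s) c True"
      unfolding xs(2) by (rule mono_induced_copy_of_red_selection)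
  qed
qed

lemma blowup_star_arrower:
  fixes H :: "'a graph"
  assumes H: "graph H"
  obtains F :: "('a \<times> nat) graph"
  where "graph F" "card (verts F) = s * (card (edges H) * (n - 1) + card (verts H))"
    "ind_arrows F (blowup H s) (star n)"
proof -
  obtain xs where xs: "distinct xs" "set xs = verts H"
    using H finite_distinct_list unfolding graph_def by metis
  let ?F = "weighted_blowup H (greedy_weight (edges H) n s xs)"
  show thesis
  proof (rule that)
    show "graph ?F"
      by (rule graph_weighted_blowup[OF H])
    show "card (verts ?F) = s * (card (edges H) * (n - 1) + card (verts H))"
      by (rule card_verts_greedy_weighted_blowup[OF H xs])
    show "ind_arrows ?F (blowup H s) (star n)"
      by (rule ind_arrows_greedy_weighted_blowup[OF H xs])
  qed
qed

theorem lemma2: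
  fixes H :: "'a graph" and n s :: nat
  assumes "graph H" and "n \<ge> 1" and "s \<ge> 1"
  shows "IR H (star n) \<le> card (edges H) * (n - 1) + card (verts H) \<and>
         IR (blowup H s) (star n) \<le> s * (card (edges H) * (n - 1) + card (verts H))"
proof
  obtain F :: "('a \<times> nat) graph" where F: "graph F"
    "card (verts F) = 1 * (card (edges H) * (n - 1) + card (verts H))"
    "ind_arrows F (blowup H 1) (star n)"
    using blowup_star_arrower[OF assms(1), where s = 1 and n = n] .
  have "ind_arrows F H (star n)"
    using ind_arrows_induced_subgraph[OF induced_embedding_blowup_1 F(3)] .
  with IR_le_card[OF F(1)] F(2)
  show "IR H (star n) \<le> card (edges H) * (n - 1) + card (verts H)" by simp
next
  obtain F :: "('a \<times> nat) graph" where F: "graph F"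
    "card (verts F) = s * (card (edges H) * (n - 1) + card (verts H))"
    "ind_arrows F (blowup H s) (star n)"
    using blowup_star_arrower[OF assms(1), where s = s and n = n] .
  with IR_le_card[OF F(1) F(3)]
  show "IR (blowup H s) (star n) \<le> s * (card (edges H) * (n - 1) + card (verts H))" by simp
qed

end
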